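(* Let $n\ge 2$, let $A\in\mathbb{R}^{n\times n}$ be symmetric positive definite, $B=A^{1/2}$, $E=\{x: x^{\top}A^{-1}x=1\}$, fix $x_0$ with $x_0^{\top}A^{-1}x_0=1$ and set $y_0=B^{-1}x_0\in S^{n-1}$. For every parallelepiped $P$ inscribed in $E$ having $x_0$ as a vertex, \[ L(P)\le 2^n\sqrt{\operatorname{tr}(A)}. \] Moreover, write the edge vectors of $P$, with signs chosen so that $x_0=\tfrac12\sum_i v_i$, as $v_i=\lambda_iBu_i$ with $\lambda_i>0$ and $U=[u_1\ \cdots\ u_n]\in O(n)$. Then equality holds if and only if, writing $z:=U^{\top}y_0$, \[ \operatorname{diag}\big(U^{\top}AU\big)=\operatorname{tr}(A)\,z\odot z\quad\text{and}\quad \lambda_i=2z_i\ (i=1,\dots,n). \]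
   Context: A (centred, $n$-dimensional) parallelepiped with linearly independent edge vectors $v_1,\dots,v_n$ is $P=\{\sum_i t_iv_i:|t_i|\le\tfrac12\}$ with vertices $\tfrac12\sum_i\varepsilon_iv_i$, $\varepsilon\in\{\pm1\}^n$; it is inscribed in $E$ if all vertices satisfy $x^{\top}A^{-1}x=1$. For such inscribed $P$, the vectors $B^{-1}v_i$ are pairwise orthogonal, so they can be written as $\lambda_iu_i$ with $U\in O(n)$, $\lambda_i=\|B^{-1}v_i\|$. $L(P)=2^{n-1}\sum_i\|v_i\|$ is the total edge length. $\odot$ is the componentwise (Hadamard) product and $\operatorname{diag}(M)$ the vector of diagonal entries of $M$. *)

theory Defs
  imports "HOL-Analysis.Analysis"
begin

definition sym_posdef :: "real^'n^'n \<Rightarrow> bool" where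
  "sym_posdef A \<longleftrightarrow> transpose A = A \<and> (\<forall>x. x \<noteq> 0 \<longrightarrow> x \<bullet> (A *v x) > 0)"

definition ellipsoid :: "real^'n^'n \<Rightarrow> (real^'n) set" where
  "ellipsoid A = {x. x \<bullet> (matrix_inv A *v x) = 1}"

definition lin_indep_family :: "('n \<Rightarrow> real^'n) \<Rightarrow> bool" where
  "lin_indep_family v \<longleftrightarrow> inj v \<and> independent (range v)"

definition pp_vertices :: "('n::finite \<Rightarrow> real^'n) \<Rightarrow> (real^'n) set" where
  "pp_vertices v = {(1/2) *\<^sub>R (\<Sum>i\<in>UNIV. eps i *\<^sub>R v i) | eps. \<forall>i. eps i \<in> {-1, 1}}"

definition inscribed :: "('n::finite \<Rightarrow> real^'n) \<Rightarrow> real^'n^'n \<Rightarrow> bool" where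
  "inscribed v A \<longleftrightarrow> pp_vertices v \<subseteq> ellipsoid A"

definition edge_length :: "('n::finite \<Rightarrow> real^'n) \<Rightarrow> real" where
  "edge_length v = 2 ^ (CARD('n) - 1) * (\<Sum>i\<in>UNIV. norm (v i))"

end

theory Submission
  imports Defs
begin

text \<open>Put w_i = B^-1 v_i. Since x^T A^-1 x = |B^-1 x|^2, every signed sum
  sum_i eps_i w_i has norm 2, and comparing the four sign patterns on a pair of indices
  shows that the w_i are pairwise orthogonal; hence w_i = lam_i u_i with U orthogonal, and
  the vertex with all signs positive gives sum_i lam_i^2 = 4. Now |v_i| = lam_i |B u_i| and
  sum_i |B u_i|^2 = tr (U^T A U) = tr A, so Cauchy-Schwarz gives sum_i |v_i| <= 2 sqrt (tr A),
  with equality iff (|B u_i|)_i is proportional to (lam_i)_i, i.e. (U^T A U)_ii = tr A (lam_i/2)^2.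
  Finally U^T B^-1 x0 = lam/2, so the condition lam_i = 2 z_i holds automatically.\<close>

lemma matrix_inv_eqI:
  fixes M X :: "real^'n^'n"
  assumes "M ** X = mat 1"
  shows "matrix_inv M = X"
proof -
  have inv: "M ** matrix_inv M = mat 1 \<and> matrix_inv M ** M = mat 1"
    unfolding matrix_inv_def
    by (rule someI[of _ X]) (use assms matrix_left_right_inverse in blast)
  have "X ** M = mat 1"
    using assms matrix_left_right_inverse by blast
  then have "matrix_inv M = X ** M ** matrix_inv M"
    by simp
  also have "\<dots> = X"
    using inv by (simp flip: matrix_mul_assoc)
  finally show ?thesis .
qed

lemma invertible_matrix_inv:
  fixes M :: "real^'n^'n"
  assumes "invertible M"
  shows "M ** matrix_inv M = mat 1" "matrix_inv M ** M = mat 1"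
  using assms matrix_inv_eqI matrix_left_right_inverse unfolding invertible_def by metis+

lemma matrix_inv_mult_vector_cancel:
  fixes B :: "real^'n^'n"
  assumes "invertible B"
  shows "matrix_inv B *v (B *v x) = x" "B *v (matrix_inv B *v x) = x"
  using invertible_matrix_inv[OF assms] by (simp_all add: matrix_vector_mul_assoc)

lemma matrix_inv_mult:
  fixes M N :: "real^'n^'n"
  assumes "invertible M" "invertible N"
  shows "matrix_inv (M ** N) = matrix_inv N ** matrix_inv M"
proof (rule matrix_inv_eqI)
  have "M ** N ** (matrix_inv N ** matrix_inv M) = M ** (N ** matrix_inv N) ** matrix_inv M"
    by (simp add: matrix_mul_assoc)
  then show "M ** N ** (matrix_inv N ** matrix_inv M) = mat 1"
    using assms by (simp add: invertible_matrix_inv)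
qed

lemma matrix_inv_transpose:
  fixes M :: "real^'n^'n"
  assumes "invertible M"
  shows "matrix_inv (transpose M) = transpose (matrix_inv M)"
  by (rule matrix_inv_eqI)
    (simp add: invertible_matrix_inv(2)[OF assms] flip: matrix_transpose_mul)

lemma inner_matrix_vector_mult_left:
  fixes M :: "real^'n^'m"
  shows "(M *v x) \<bullet> y = x \<bullet> (transpose M *v y)"
  by (metis dot_lmul_matrix transpose_matrix_vector transpose_transpose)

lemma norm_orthogonal_matrix_vector_mult:
  fixes Q :: "real^'n^'n"
  assumes "orthogonal_matrix Q"
  shows "norm (Q *v x) = norm x"
  using assms orthogonal_transformation_norm[of "(*v) Q"]
  by (simp add: orthogonal_transformation_matrix matrix_of_matrix_vector_mul matrix_vector_mul_linear)

lemma diag_transpose_mult_mult: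
  fixes A U :: "real^'n^'n"
  shows "(transpose U ** A ** U) $ i $ i = column i U \<bullet> (A *v column i U)"
  unfolding matrix_matrix_mult_def matrix_vector_mult_def inner_vec_def column_def transpose_def
  by (simp add: sum_distrib_left sum_distrib_right mult.assoc mult.left_commute) (subst sum.swap, simp)

lemma trace_orthogonal_conj:
  fixes A U :: "real^'n^'n"
  assumes "orthogonal_matrix U"
  shows "trace (transpose U ** A ** U) = trace A"
  using assms by (simp add: trace_mul_sym[of _ U] matrix_mul_assoc orthogonal_matrix_def
      flip: matrix_mul_assoc[of U])

lemma sym_posdef_invertible:
  assumes "sym_posdef M"
  shows "invertible M"
  using assms unfolding sym_posdef_def invertible_left_inverse matrix_left_invertible_ker
  by (metis inner_zero_right less_irrefl)

lemma norm_mult_symmetric_sqrt_squared: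
  fixes A B :: "real^'n^'n"
  assumes "transpose B = B" "B ** B = A"
  shows "(norm (B *v u))\<^sup>2 = u \<bullet> (A *v u)"
  using assms inner_matrix_vector_mult_left[of B u]
  by (simp add: power2_norm_eq_inner matrix_vector_mul_assoc flip: assms(2))

lemma ellipsoid_iff_norm_inv_sqrt:
  fixes A B :: "real^'n^'n"
  assumes "transpose B = B" "invertible B" "B ** B = A"
  shows "x \<in> ellipsoid A \<longleftrightarrow> norm (matrix_inv B *v x) = 1"
proof -
  have "matrix_inv A = matrix_inv B ** matrix_inv B"
    using matrix_inv_mult[of B B] assms(2,3) by simp
  moreover have "transpose (matrix_inv B) = matrix_inv B"
    using matrix_inv_transpose[of B] assms(1,2) by simp
  ultimately have "x \<bullet> (matrix_inv A *v x) = (norm (matrix_inv B *v x))\<^sup>2"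
    using norm_mult_symmetric_sqrt_squared[of "matrix_inv B" "matrix_inv A" x] by simp
  then show ?thesis
    by (simp add: ellipsoid_def abs_square_eq_1)
qed

lemma orthogonal_if_signed_sums_same_norm:
  fixes w :: "'i::finite \<Rightarrow> 'a::real_inner"
  assumes same_norm: "\<And>eps. (\<forall>i. eps i \<in> {-1, 1}) \<Longrightarrow> norm (\<Sum>i\<in>UNIV. eps i *\<^sub>R w i) = c"
    and "j \<noteq> k"
  shows "orthogonal (w j) (w k)"
proof -
  define R where "R = (\<Sum>i\<in>UNIV - {j, k}. w i)"
  have signed_sum: "(\<Sum>i\<in>UNIV. (if i = j then a else if i = k then b else 1) *\<^sub>R w i)
      = R + a *\<^sub>R w j + b *\<^sub>R w k" for a b :: real
  proof -
    have "R = (\<Sum>i\<in>UNIV - {j} - {k}. (if i = j then a else if i = k then b else 1) *\<^sub>R w i)"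
      unfolding R_def by (intro sum.cong) auto
    then show ?thesis
      using \<open>j \<noteq> k\<close> by (simp add: sum.remove[of UNIV j] sum.remove[of "UNIV - {j}" k])
  qed
  have "(norm (R + a *\<^sub>R w j + b *\<^sub>R w k))\<^sup>2 = c\<^sup>2" if "a \<in> {-1, 1}" "b \<in> {-1, 1}" for a b
    using same_norm[of "\<lambda>i. if i = j then a else if i = k then b else 1"] that
    by (simp add: signed_sum)
  from this[of 1 1] this[of "-1" "-1"] this[of 1 "-1"] this[of "-1" 1]
  show ?thesis
    by (simp add: orthogonal_def power2_norm_eq_inner inner_commute algebra_simps)
qed

lemma inscribed_edge_decomposition:
  fixes A B :: "real^'n^'n" and v :: "'n \<Rightarrow> real^'n"
  assumes B: "transpose B = B" "invertible B" "B ** B = A"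
    and indep: "lin_indep_family v" and insc: "inscribed v A"
  obtains lam U where "orthogonal_matrix U" "\<forall>i. lam i > 0"
    "\<forall>i. v i = lam i *\<^sub>R (B *v column i U)"
proof -
  define w where "w i = matrix_inv B *v v i" for i
  have Bw: "B *v w i = v i" for i
    by (simp add: w_def matrix_inv_mult_vector_cancel B(2))
  have "v i \<noteq> 0" for i
    using indep dependent_zero[of "range v"] by (auto simp: lin_indep_family_def)
  then have w_nz: "w i \<noteq> 0" for i
    using Bw by (metis matrix_vector_mult_0_right)
  have "norm (\<Sum>i\<in>UNIV. eps i *\<^sub>R w i) = 2" if "\<forall>i. eps i \<in> {-1, 1}" for eps
  proof -
    have "(1/2) *\<^sub>R (\<Sum>i\<in>UNIV. eps i *\<^sub>R v i) \<in> ellipsoid A"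
      using insc that unfolding inscribed_def pp_vertices_def by blast
    moreover have "matrix_inv B *v ((1/2) *\<^sub>R (\<Sum>i\<in>UNIV. eps i *\<^sub>R v i))
        = (1/2) *\<^sub>R (\<Sum>i\<in>UNIV. eps i *\<^sub>R w i)"
      by (simp add: vec.sum matrix_vector_mult_scaleR w_def)
    ultimately show ?thesis
      using ellipsoid_iff_norm_inv_sqrt[OF B] by simp
  qed
  then have orth: "orthogonal (w j) (w k)" if "j \<noteq> k" for j k
    using orthogonal_if_signed_sums_same_norm that by blast
  define U :: "real^'n^'n" where "U = transpose (\<chi> i. (1 / norm (w i)) *\<^sub>R w i)"
  have col: "column i U = (1 / norm (w i)) *\<^sub>R w i" for i
    by (simp add: U_def row_def vec_eq_iff)
  have "orthogonal_matrix U"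
    unfolding orthogonal_matrix_orthonormal_columns
    using w_nz orth by (simp add: col orthogonal_clauses)
  moreover have "\<forall>i. norm (w i) > 0"
    using w_nz by simp
  moreover have "\<forall>i. v i = norm (w i) *\<^sub>R (B *v column i U)"
    using w_nz by (simp add: col matrix_vector_mult_scaleR Bw)
  ultimately show ?thesis
    by (rule that)
qed

lemma half_sum_edges_in_rotated_frame:
  fixes B U :: "real^'n^'n"
  assumes "invertible B" "orthogonal_matrix U" "\<forall>i. v i = lam i *\<^sub>R (B *v column i U)"
  shows "transpose U *v (matrix_inv B *v ((1/2) *\<^sub>R (\<Sum>i\<in>UNIV. v i))) = (\<chi> i. lam i / 2)"
proof -
  have "matrix_inv B *v v i = lam i *\<^sub>R column i U" for i
    using assms(1,3) by (simp add: matrix_vector_mult_scaleR matrix_inv_mult_vector_cancel)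
  then have "matrix_inv B *v ((1/2) *\<^sub>R (\<Sum>i\<in>UNIV. v i)) = (1/2) *\<^sub>R (U *v (\<chi> i. lam i))"
    by (simp add: vec.sum matrix_vector_mult_scaleR matrix_mult_sum[of U] scalar_mult_eq_scaleR)
  moreover have "transpose U ** U = mat 1"
    using assms(2) by (simp add: orthogonal_matrix_def)
  ultimately have "transpose U *v (matrix_inv B *v ((1/2) *\<^sub>R (\<Sum>i\<in>UNIV. v i)))
      = (1/2) *\<^sub>R (\<chi> i. lam i)"
    by (simp add: matrix_vector_mult_scaleR matrix_vector_mul_assoc)
  also have "\<dots> = (\<chi> i. lam i / 2)"
    by (simp add: vec_eq_iff)
  finally show ?thesis .
qed

lemma vertex_on_ellipsoid_sum_squares:
  fixes A B U :: "real^'n^'n"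
  assumes B: "transpose B = B" "invertible B" "B ** B = A"
    and U: "orthogonal_matrix U" and v: "\<forall>i. v i = lam i *\<^sub>R (B *v column i U)"
    and "(1/2) *\<^sub>R (\<Sum>i\<in>UNIV. v i) \<in> ellipsoid A"
  shows "(\<Sum>i\<in>UNIV. (lam i)\<^sup>2) = 4"
proof -
  have "norm (matrix_inv B *v ((1/2) *\<^sub>R (\<Sum>i\<in>UNIV. v i))) = 1"
    using assms(6) ellipsoid_iff_norm_inv_sqrt[OF B] by simp
  then have "norm (\<chi> i. lam i / 2) = 1"
    using norm_orthogonal_matrix_vector_mult[of "transpose U"] U
    by (simp only: orthogonal_matrix_transpose flip: half_sum_edges_in_rotated_frame[OF B(2) U v])
  then have "(\<Sum>i\<in>UNIV. (lam i / 2)\<^sup>2) = 1"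
    by (simp add: norm_eq_1 inner_vec_def power2_eq_square)
  then show ?thesis
    by (simp add: power_divide flip: sum_divide_distrib)
qed

lemma sum_norm_scaled_edges:
  fixes A B U :: "real^'n^'n"
  assumes B: "transpose B = B" "B ** B = A" and U: "orthogonal_matrix U"
    and lam: "\<forall>i. lam i \<ge> 0" "(\<Sum>i\<in>UNIV. (lam i)\<^sup>2) = 4"
  shows "(\<Sum>i\<in>UNIV. norm (lam i *\<^sub>R (B *v column i U))) \<le> 2 * sqrt (trace A)"
    and "(\<Sum>i\<in>UNIV. norm (lam i *\<^sub>R (B *v column i U))) = 2 * sqrt (trace A) \<longleftrightarrow>
      (\<forall>i. (transpose U ** A ** U) $ i $ i = trace A * ((lam i / 2) * (lam i / 2)))"
proof -
  let ?S = "\<Sum>i\<in>UNIV. norm (lam i *\<^sub>R (B *v column i U))"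
  define l :: "real^'n" where "l = (\<chi> i. lam i)"
  define b :: "real^'n" where "b = (\<chi> i. norm (B *v column i U))"
  have diag: "(transpose U ** A ** U) $ i $ i = (b $ i)\<^sup>2" for i
    using norm_mult_symmetric_sqrt_squared[OF B] by (simp add: b_def diag_transpose_mult_mult)
  have sum_eq: "?S = l \<bullet> b"
    using lam(1) by (simp add: l_def b_def inner_vec_def)
  have norm_l: "norm l = 2"
    using lam(2) by (simp add: l_def norm_eq_sqrt_inner inner_vec_def power2_eq_square)
  have "(norm b)\<^sup>2 = (\<Sum>i\<in>UNIV. (b $ i)\<^sup>2)"
    unfolding power2_norm_eq_inner inner_vec_def by (simp add: power2_eq_square)
  then have trace_eq: "trace A = (norm b)\<^sup>2"
    using trace_orthogonal_conj[OF U, of A] by (simp add: trace_def diag)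
  then have norm_b: "norm b = sqrt (trace A)"
    by simp
  show "?S \<le> 2 * sqrt (trace A)"
    using norm_cauchy_schwarz[of l b] unfolding sum_eq by (simp add: norm_l norm_b)
  have pointwise: "2 * b $ i = sqrt (trace A) * lam i \<longleftrightarrow>
      (transpose U ** A ** U) $ i $ i = trace A * ((lam i / 2) * (lam i / 2))" for i
  proof -
    have "2 * b $ i \<ge> 0" "sqrt (trace A) * lam i \<ge> 0"
      using lam(1) by (simp_all add: b_def flip: norm_b)
    then have "2 * b $ i = sqrt (trace A) * lam i \<longleftrightarrow> (2 * b $ i)\<^sup>2 = (sqrt (trace A) * lam i)\<^sup>2"
      by (simp only: power2_eq_iff_nonneg)
    then show ?thesis
      using trace_eq by (simp add: diag power_mult_distrib power2_eq_square field_simps)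
  qed
  have "?S = 2 * sqrt (trace A) \<longleftrightarrow> norm l *\<^sub>R b = norm b *\<^sub>R l"
    using norm_cauchy_schwarz_eq[of l b] unfolding sum_eq by (simp add: norm_l norm_b)
  also have "\<dots> \<longleftrightarrow> (\<forall>i. 2 * b $ i = sqrt (trace A) * lam i)"
    unfolding norm_l norm_b by (simp add: vec_eq_iff l_def)
  finally show "?S = 2 * sqrt (trace A) \<longleftrightarrow>
      (\<forall>i. (transpose U ** A ** U) $ i $ i = trace A * ((lam i / 2) * (lam i / 2)))"
    by (simp only: pointwise)
qed

lemma half_sum_in_pp_vertices: "(1/2) *\<^sub>R (\<Sum>i\<in>UNIV. v i) \<in> pp_vertices v"
  unfolding pp_vertices_def by (rule CollectI, rule exI[of _ "\<lambda>_. 1"]) simp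

lemma edge_length_compare_pow_card:
  fixes v :: "'n::finite \<Rightarrow> real^'n"
  shows "edge_length v \<le> 2 ^ CARD('n) * c \<longleftrightarrow> (\<Sum>i\<in>UNIV. norm (v i)) \<le> 2 * c"
    and "edge_length v = 2 ^ CARD('n) * c \<longleftrightarrow> (\<Sum>i\<in>UNIV. norm (v i)) = 2 * c"
proof -
  have pow: "(2::real) ^ CARD('n) = 2 ^ (CARD('n) - 1) * 2"
    by (metis Suc_diff_1 power_Suc2 zero_less_card_finite)
  show "edge_length v \<le> 2 ^ CARD('n) * c \<longleftrightarrow> (\<Sum>i\<in>UNIV. norm (v i)) \<le> 2 * c"
    and "edge_length v = 2 ^ CARD('n) * c \<longleftrightarrow> (\<Sum>i\<in>UNIV. norm (v i)) = 2 * c"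
    by (simp_all add: edge_length_def pow mult.assoc)
qed

lemma edge_length_le_sqrt_trace:
  fixes A B :: "real^'n^'n" and v :: "'n \<Rightarrow> real^'n"
  assumes B: "transpose B = B" "invertible B" "B ** B = A"
    and indep: "lin_indep_family v" and insc: "inscribed v A"
  shows "edge_length v \<le> 2 ^ CARD('n) * sqrt (trace A)"
proof -
  obtain lam U where U: "orthogonal_matrix U" "\<forall>i. lam i > 0"
    "\<forall>i. v i = lam i *\<^sub>R (B *v column i U)"
    using inscribed_edge_decomposition[OF B indep insc] .
  have lam_sq: "(\<Sum>i\<in>UNIV. (lam i)\<^sup>2) = 4"
    using vertex_on_ellipsoid_sum_squares[OF B U(1,3)] half_sum_in_pp_vertices[of v] insc
    by (auto simp: inscribed_def)
  show ?thesis
    unfolding edge_length_compare_pow_card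
    using sum_norm_scaled_edges(1)[OF B(1,3) U(1) _ lam_sq] U(2,3) by (simp add: less_imp_le)
qed

lemma edge_length_eq_sqrt_trace_iff:
  fixes A B U :: "real^'n^'n" and v :: "'n \<Rightarrow> real^'n"
  assumes B: "transpose B = B" "invertible B" "B ** B = A"
    and U: "orthogonal_matrix U" and lam: "\<forall>i. lam i \<ge> 0"
    and v: "\<forall>i. v i = lam i *\<^sub>R (B *v column i U)"
    and vertex: "(1/2) *\<^sub>R (\<Sum>i\<in>UNIV. v i) \<in> ellipsoid A"
  shows "edge_length v = 2 ^ CARD('n) * sqrt (trace A) \<longleftrightarrow>
    (\<forall>i. (transpose U ** A ** U) $ i $ i = trace A * ((lam i / 2) * (lam i / 2)))"
proof -
  have lam_sq: "(\<Sum>i\<in>UNIV. (lam i)\<^sup>2) = 4"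
    using vertex_on_ellipsoid_sum_squares[OF B U v vertex] .
  show ?thesis
    unfolding edge_length_compare_pow_card
    using sum_norm_scaled_edges(2)[OF B(1,3) U lam lam_sq] lam v by simp
qed

theorem proposition3p3:
  fixes A B :: "real^'n^'n" and x0 :: "real^'n"
  assumes n2: "CARD('n) \<ge> 2"
    and A: "sym_posdef A"
    and B: "sym_posdef B" "B ** B = A"
    and x0: "x0 \<in> ellipsoid A"
  shows
    "(\<forall>v :: 'n \<Rightarrow> real^'n. lin_indep_family v \<and> inscribed v A \<and> x0 \<in> pp_vertices v \<longrightarrow>
        edge_length v \<le> 2 ^ CARD('n) * sqrt (trace A))
     \<and>
     (\<forall>(v :: 'n \<Rightarrow> real^'n) (lam :: 'n \<Rightarrow> real) (U :: real^'n^'n).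
        lin_indep_family v \<and> inscribed v A \<and>
        x0 = (1/2) *\<^sub>R (\<Sum>i\<in>UNIV. v i) \<and>
        orthogonal_matrix U \<and> (\<forall>i. lam i > 0) \<and>
        (\<forall>i. v i = lam i *\<^sub>R (B *v column i U)) \<longrightarrow>
        (let y0 = matrix_inv B *v x0; z = transpose U *v y0 in
          edge_length v = 2 ^ CARD('n) * sqrt (trace A) \<longleftrightarrow>
          ((\<forall>i. (transpose U ** A ** U) $ i $ i = trace A * (z $ i * z $ i)) \<and>
           (\<forall>i. lam i = 2 * z $ i))))"
proof -
  have B': "transpose B = B" "invertible B" "B ** B = A"
    using B by (simp_all add: sym_posdef_def sym_posdef_invertible)
  show ?thesis
  proof (intro conjI allI impI)
    fix v :: "'n \<Rightarrow> real^'n"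
    assume "lin_indep_family v \<and> inscribed v A \<and> x0 \<in> pp_vertices v"
    then show "edge_length v \<le> 2 ^ CARD('n) * sqrt (trace A)"
      using edge_length_le_sqrt_trace[OF B'] by blast
  next
    fix v :: "'n \<Rightarrow> real^'n" and lam and U :: "real^'n^'n"
    assume "lin_indep_family v \<and> inscribed v A \<and> x0 = (1/2) *\<^sub>R (\<Sum>i\<in>UNIV. v i) \<and>
      orthogonal_matrix U \<and> (\<forall>i. lam i > 0) \<and> (\<forall>i. v i = lam i *\<^sub>R (B *v column i U))"
    then have x0v: "x0 = (1/2) *\<^sub>R (\<Sum>i\<in>UNIV. v i)" and U: "orthogonal_matrix U"
      and lam: "\<forall>i. lam i \<ge> 0" and v: "\<forall>i. v i = lam i *\<^sub>R (B *v column i U)"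
      by (auto simp: less_imp_le)
    have z: "transpose U *v (matrix_inv B *v x0) = (\<chi> i. lam i / 2)"
      using half_sum_edges_in_rotated_frame[OF B'(2) U v] x0v by simp
    show "let y0 = matrix_inv B *v x0; z = transpose U *v y0 in
        edge_length v = 2 ^ CARD('n) * sqrt (trace A) \<longleftrightarrow>
        ((\<forall>i. (transpose U ** A ** U) $ i $ i = trace A * (z $ i * z $ i)) \<and>
         (\<forall>i. lam i = 2 * z $ i))"
      unfolding Let_def z
      using edge_length_eq_sqrt_trace_iff[OF B' U lam v] x0 x0v by simp
  qed
qed

end
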